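(* Let $\{e^1,e^2,e^3,e^4\}$ be a basis of $\mathbb{R}^4$, let $a,b,c\in\mathbb{R}$ with $a\ne0$, set $\Delta=b^2-4ac$, and let $\Lambda=\langle e^{12}+e^{34},\ e^{13}+e^{42},\ ae^{14}+be^{42}+ce^{23}\rangle\subseteq\Lambda^2\mathbb{R}^4$. Then there exists a linear transformation $\theta$ of $\mathbb{R}^4$ (acting on $\Lambda^2\mathbb{R}^4$ in the induced way) such that: if $\Delta<0$, $\Lambda=\theta(\langle e^{12}+e^{34},\,e^{13}+e^{42},\,e^{14}+e^{23}\rangle)$; if $\Delta=0$, $\Lambda=\theta(\langle e^{12}+e^{34},\,e^{13},\,e^{14}+e^{23}\rangle)$; if $\Delta>0$, $\Lambda=\theta(\langle e^{12}+e^{34},\,e^{13},\,e^{24}\rangle)$.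
   Context: $e^{ij}$ abbreviates $e^i\wedge e^j$. *)

theory Defs
  imports "HOL-Analysis.Analysis"
begin

text \<open>Bivectors in \<open>\<Lambda>\<^sup>2 \<real>\<^sup>4\<close> are represented as skew-symmetric 4x4 real matrices:
  \<open>v \<wedge> w\<close> corresponds to \<open>v w\<^sup>T - w v\<^sup>T\<close>.\<close>

definition wedge :: "real^4 \<Rightarrow> real^4 \<Rightarrow> real^4^4" where
  "wedge v w = (\<chi> i j. v$i * w$j - w$i * v$j)"

definition eij :: "(nat \<Rightarrow> real^4) \<Rightarrow> nat \<Rightarrow> nat \<Rightarrow> real^4^4" where
  "eij e i j = wedge (e i) (e j)"

text \<open>Induced action of a linear map (matrix) \<open>\<theta>\<close> on \<open>\<Lambda>\<^sup>2\<close>: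
  \<open>\<theta>(v \<wedge> w) = \<theta> v \<wedge> \<theta> w\<close>, i.e. \<open>M \<mapsto> \<theta> M \<theta>\<^sup>T\<close>.\<close>
definition act2 :: "real^4^4 \<Rightarrow> real^4^4 \<Rightarrow> real^4^4" where
  "act2 \<theta> M = \<theta> ** M ** transpose \<theta>"

end

theory Submission
  imports Defs
begin

text \<open>
  Transporting along the matrix \<open>E\<close> with columns \<open>e\<^sub>1, \<dots>, e\<^sub>4\<close> reduces everything to the
  standard basis, where \<open>\<Lambda>(a,b,c)\<close> is spanned by \<open>e\<^sup>1\<^sup>2 + e\<^sup>3\<^sup>4\<close>, \<open>e\<^sup>1\<^sup>3 + e\<^sup>4\<^sup>2\<close> and
  \<open>a e\<^sup>1\<^sup>4 + b e\<^sup>4\<^sup>2 + c e\<^sup>2\<^sup>3\<close>. The shear \<open>e\<^sub>1 \<mapsto> e\<^sub>1 + q e\<^sub>2\<close>, \<open>e\<^sub>4 \<mapsto> e\<^sub>4 + q e\<^sub>3\<close> fixes the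
  first two generators and maps \<open>e\<^sup>1\<^sup>4 + k e\<^sup>2\<^sup>3\<close> to \<open>e\<^sup>1\<^sup>4 - 2q e\<^sup>4\<^sup>2 + (q\<^sup>2 + k) e\<^sup>2\<^sup>3\<close> modulo
  \<open>e\<^sup>1\<^sup>3 + e\<^sup>4\<^sup>2\<close>; with \<open>q = -b/2a\<close> this completes the square and relates
  \<open>\<Lambda>(a,b,c)\<close> to \<open>\<Lambda>(1,0,k)\<close> with \<open>k = -\<Delta>/4a\<^sup>2\<close>. The diagonal map \<open>diag(1,r,r,1)\<close> replaces \<open>k\<close>
  by \<open>r\<^sup>2 k\<close>, so only the sign of \<open>k\<close> matters, and the three cases \<open>k = 1, 0, -1\<close> are matched
  with the normal forms by explicit maps.
\<close>

lemma act2_wedge: "act2 \<theta> (wedge v w) = wedge (\<theta> *v v) (\<theta> *v w)"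
  unfolding act2_def wedge_def
  by (simp add: vec_eq_iff matrix_matrix_mult_def matrix_vector_mult_def transpose_def sum_4 algebra_simps)

lemma act2_add [simp]: "act2 \<theta> (M + N) = act2 \<theta> M + act2 \<theta> N"
  by (simp add: act2_def vec_eq_iff matrix_matrix_mult_def sum_4 algebra_simps)

lemma act2_scaleR [simp]: "act2 \<theta> (r *\<^sub>R M) = r *\<^sub>R act2 \<theta> M"
  by (simp add: act2_def vec_eq_iff matrix_matrix_mult_def sum_4 algebra_simps)

lemma linear_act2: "linear (act2 \<theta>)"
  by (rule linearI) simp_all

lemma act2_mult: "act2 (A ** B) M = act2 A (act2 B M)"
  by (simp add: act2_def matrix_mul_assoc matrix_transpose_mul)

lemma span_act2_image: "span (act2 \<theta> ` S) = act2 \<theta> ` span S"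
  by (rule span_linear_image[OF linear_act2])

definition gl_equiv :: "(real^4^4) set \<Rightarrow> (real^4^4) set \<Rightarrow> bool" where
  "gl_equiv U V \<longleftrightarrow> (\<exists>\<theta>. invertible \<theta> \<and> U = act2 \<theta> ` V)"

lemma gl_equivI: "invertible \<theta> \<Longrightarrow> U = act2 \<theta> ` V \<Longrightarrow> gl_equiv U V"
  unfolding gl_equiv_def by blast

lemma gl_equiv_span_act2: "invertible \<theta> \<Longrightarrow> gl_equiv (span (act2 \<theta> ` S)) (span S)"
  by (simp add: gl_equivI span_act2_image)

lemma gl_equiv_trans:
  assumes "gl_equiv U V" and "gl_equiv V W"
  shows "gl_equiv U W"
proof -
  obtain \<theta> \<eta> where "invertible \<theta>" "U = act2 \<theta> ` V" "invertible \<eta>" "V = act2 \<eta> ` W"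
    using assms unfolding gl_equiv_def by blast
  then show ?thesis
    by (intro gl_equivI[of "\<theta> ** \<eta>"]) (simp_all add: invertible_mult image_image act2_mult)
qed

lemma gl_equiv_act2_image:
  assumes "invertible E" and "gl_equiv U V"
  shows "gl_equiv (act2 E ` U) (act2 E ` V)"
proof -
  obtain \<theta> where \<theta>: "invertible \<theta>" and U: "U = act2 \<theta> ` V"
    using assms(2) unfolding gl_equiv_def by blast
  obtain E' where E': "E ** E' = mat 1" "E' ** E = mat 1"
    using assms(1) unfolding invertible_def by blast
  have "act2 (E ** \<theta> ** E') (act2 E M) = act2 E (act2 \<theta> M)" for M
    by (simp add: act2_mult[symmetric] matrix_mul_assoc[symmetric] E'(2))
  then have "act2 E ` U = act2 (E ** \<theta> ** E') ` act2 E ` V"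
    unfolding U image_image by simp
  moreover have "invertible E'"
    using E' unfolding invertible_def by blast
  then have "invertible (E ** \<theta> ** E')"
    using assms(1) \<theta> by (simp add: invertible_mult)
  ultimately show ?thesis by (rule gl_equivI[rotated])
qed

lemma span_insert_scale_add:
  fixes x w :: "'a::real_vector"
  assumes "s \<noteq> 0" and "w \<in> span S"
  shows "span (insert (s *\<^sub>R x + w) S) = span (insert x S)"
proof -
  let ?y = "s *\<^sub>R x + w"
  have w: "w \<in> span (insert v S)" for v
    using assms(2) span_mono[of S "insert v S"] by blast
  have "?y \<in> span (insert x S)"
    by (intro span_add span_scale w span_base insertI1)
  then have "span (insert ?y (insert x S)) = span (insert x S)"
    by (rule span_redundant)
  moreover have "inverse s *\<^sub>R (?y - w) \<in> span (insert ?y S)"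
    by (intro span_scale span_diff w span_base insertI1)
  then have "span (insert x (insert ?y S)) = span (insert ?y S)"
    using assms(1) by (intro span_redundant) simp
  ultimately show ?thesis
    by (simp add: insert_commute[of x ?y S])
qed

lemma span_insert_scale:
  fixes x :: "'a::real_vector"
  assumes "s \<noteq> 0"
  shows "span (insert (s *\<^sub>R x) S) = span (insert x S)"
  using span_insert_scale_add[OF assms span_zero] by simp

lemma span_triple_scale_add:
  fixes x y z w :: "'a::real_vector"
  assumes "s \<noteq> 0" and "w \<in> span {x, y}"
  shows "span {x, y, s *\<^sub>R z + w} = span {x, y, z}"
  using span_insert_scale_add[OF assms] by (simp add: insert_commute)

abbreviation ax :: "4 \<Rightarrow> real^4" where "ax k \<equiv> axis k 1"

abbreviation W :: "4 \<Rightarrow> 4 \<Rightarrow> real^4^4" where "W i j \<equiv> wedge (ax i) (ax j)"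

definition cols4 :: "real^4 \<Rightarrow> real^4 \<Rightarrow> real^4 \<Rightarrow> real^4 \<Rightarrow> real^4^4" where
  "cols4 u1 u2 u3 u4 = (\<chi> i j. (if j = 1 then u1 else if j = 2 then u2 else if j = 3 then u3 else u4) $ i)"

lemma cols4_axis [simp]:
  "cols4 u1 u2 u3 u4 *v ax 1 = u1" "cols4 u1 u2 u3 u4 *v ax 2 = u2"
  "cols4 u1 u2 u3 u4 *v ax 3 = u3" "cols4 u1 u2 u3 u4 *v ax 4 = u4"
  by (simp_all add: matrix_vector_mult_basis column_def cols4_def)

lemma columns_cols4: "columns (cols4 u1 u2 u3 u4) = {u1, u2, u3, u4}"
proof -
  have "columns (cols4 u1 u2 u3 u4) = (\<lambda>i. cols4 u1 u2 u3 u4 *v ax i) ` UNIV"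
    unfolding columns_def matrix_vector_mult_basis by blast
  then show ?thesis
    unfolding UNIV_4 by simp
qed

lemma cols4_mult:
  fixes A :: "real^4^4"
  shows "A ** cols4 u1 u2 u3 u4 = cols4 (A *v u1) (A *v u2) (A *v u3) (A *v u4)"
  by (simp add: vec_eq_iff cols4_def matrix_matrix_mult_def matrix_vector_mult_def)

lemma cols4_axes: "cols4 (ax 1) (ax 2) (ax 3) (ax 4) = mat 1"
  by (simp add: vec_eq_iff forall_4 cols4_def mat_def axis_def)

lemma invertible_cols4I:
  fixes A :: "real^4^4"
  assumes "A *v u1 = ax 1" and "A *v u2 = ax 2" and "A *v u3 = ax 3" and "A *v u4 = ax 4"
  shows "invertible A"
  unfolding invertible_right_inverse
  using assms by (intro exI[of _ "cols4 u1 u2 u3 u4"]) (simp add: cols4_mult cols4_axes)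

lemma invertible_cols4:
  assumes "independent {u1, u2, u3, u4}" and "card {u1, u2, u3, u4} = 4"
  shows "invertible (cols4 u1 u2 u3 u4)"
proof -
  have "UNIV \<subseteq> span {u1, u2, u3, u4}"
    using card_ge_dim_independent[OF subset_UNIV assms(1)] assms(2) by simp
  then have "span {u1, u2, u3, u4} = UNIV"
    by blast
  then show ?thesis
    unfolding invertible_right_inverse matrix_right_invertible_span_columns span_vec_eq columns_cols4 .
qed

lemmas bivector_entries = vec_eq_iff forall_4 wedge_def axis_def

definition Lambda :: "real \<Rightarrow> real \<Rightarrow> real \<Rightarrow> (real^4^4) set" where
  "Lambda a b c = span {W 1 2 + W 3 4, W 1 3 + W 4 2, a *\<^sub>R W 1 4 + b *\<^sub>R W 4 2 + c *\<^sub>R W 2 3}"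

lemma Lambda_complete_square:
  assumes "a \<noteq> 0"
  shows "gl_equiv (Lambda a b c) (Lambda 1 0 ((4*a*c - b^2) / (4*a^2)))"
proof -
  let ?q = "- b / (2*a)" and ?k = "(4*a*c - b^2) / (4*a^2)"
  let ?S = "cols4 (ax 1 + ?q *\<^sub>R ax 2) (ax 2) (ax 3) (ax 4 + ?q *\<^sub>R ax 3)"
  have "invertible ?S"
    by (rule invertible_cols4I[of _ "ax 1 - ?q *\<^sub>R ax 2" "ax 2" "ax 3" "ax 4 - ?q *\<^sub>R ax 3"])
      (simp_all add: algebra_simps)
  let ?A = "W 1 2 + W 3 4" and ?B = "W 1 3 + W 4 2"
  let ?X = "W 1 4 - (2 * ?q) *\<^sub>R W 4 2 + (?q^2 + ?k) *\<^sub>R W 2 3"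
  have "act2 ?S ?A = ?A" "act2 ?S ?B = ?B" "act2 ?S (W 1 4 + ?k *\<^sub>R W 2 3) = 1 *\<^sub>R ?X + ?q *\<^sub>R ?B"
    by (simp_all add: act2_wedge) (simp_all add: bivector_entries algebra_simps power2_eq_square)
  then have "span (act2 ?S ` {?A, ?B, W 1 4 + ?k *\<^sub>R W 2 3}) = span {?A, ?B, 1 *\<^sub>R ?X + ?q *\<^sub>R ?B}"
    by simp
  also have "\<dots> = span {?A, ?B, ?X}"
    by (rule span_triple_scale_add) (simp_all add: span_base span_scale span_neg)
  also have "\<dots> = span {?A, ?B, a *\<^sub>R ?X + 0}"
    by (rule span_triple_scale_add[symmetric]) (simp_all add: assms span_zero)
  also have "a *\<^sub>R ?X + 0 = a *\<^sub>R W 1 4 + b *\<^sub>R W 4 2 + c *\<^sub>R W 2 3"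
    using assms by (simp add: bivector_entries field_simps power2_eq_square)
  finally have image: "Lambda a b c = span (act2 ?S ` {?A, ?B, W 1 4 + ?k *\<^sub>R W 2 3})"
    unfolding Lambda_def ..
  have source: "Lambda 1 0 ?k = span {?A, ?B, W 1 4 + ?k *\<^sub>R W 2 3}"
    by (simp add: Lambda_def)
  show ?thesis
    unfolding image source by (rule gl_equiv_span_act2) fact
qed

lemma Lambda_rescale:
  assumes "r \<noteq> 0"
  shows "gl_equiv (Lambda 1 0 (r^2 * k)) (Lambda 1 0 k)"
proof -
  let ?D = "cols4 (ax 1) (r *\<^sub>R ax 2) (r *\<^sub>R ax 3) (ax 4)"
  have "invertible ?D"
    by (rule invertible_cols4I[of _ "ax 1" "inverse r *\<^sub>R ax 2" "inverse r *\<^sub>R ax 3" "ax 4"])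
      (simp_all add: algebra_simps assms)
  let ?A = "W 1 2 + W 3 4" and ?B = "W 1 3 + W 4 2" and ?C = "W 1 4 + (r^2 * k) *\<^sub>R W 2 3"
  have "act2 ?D ?A = r *\<^sub>R ?A" "act2 ?D ?B = r *\<^sub>R ?B" "act2 ?D (W 1 4 + k *\<^sub>R W 2 3) = ?C"
    by (simp_all add: act2_wedge) (simp_all add: bivector_entries algebra_simps power2_eq_square)
  then have "span (act2 ?D ` {?A, ?B, W 1 4 + k *\<^sub>R W 2 3}) = span {r *\<^sub>R ?A, r *\<^sub>R ?B, ?C}"
    by simp
  also have "\<dots> = span {r *\<^sub>R ?B, ?A, ?C}"
    using span_insert_scale[OF assms] by (simp add: insert_commute)
  also have "\<dots> = Lambda 1 0 (r^2 * k)"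
    by (simp only: span_insert_scale[OF assms]) (simp add: Lambda_def insert_commute)
  finally have image: "Lambda 1 0 (r^2 * k) = span (act2 ?D ` {?A, ?B, W 1 4 + k *\<^sub>R W 2 3})" ..
  have source: "Lambda 1 0 k = span {?A, ?B, W 1 4 + k *\<^sub>R W 2 3}"
    by (simp add: Lambda_def)
  show ?thesis
    unfolding image source by (rule gl_equiv_span_act2[OF \<open>invertible ?D\<close>])
qed

lemma gl_equiv_Lambda_1_0_0:
  "gl_equiv (Lambda 1 0 0) (span {W 1 2 + W 3 4, W 1 3, W 1 4 + W 2 3})"
proof -
  let ?J = "cols4 (ax 1) (ax 2) (ax 4) (- ax 3)"
  have "invertible ?J"
    by (rule invertible_cols4I[of _ "ax 1" "ax 2" "- ax 4" "ax 3"])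
      (simp_all add: linear_neg[OF matrix_vector_mul_linear])
  let ?A = "W 1 2 + W 3 4" and ?B = "W 1 3 + W 4 2"
  have "act2 ?J ?A = ?A" "act2 ?J (W 1 3) = W 1 4" "act2 ?J (W 1 4 + W 2 3) = (-1) *\<^sub>R ?B + 0"
    by (simp_all add: act2_wedge) (simp_all add: bivector_entries)
  then have "span (act2 ?J ` {?A, W 1 3, W 1 4 + W 2 3}) = span {?A, W 1 4, (-1) *\<^sub>R ?B + 0}"
    by simp
  also have "\<dots> = span {?A, W 1 4, ?B}"
    by (rule span_triple_scale_add) (simp_all add: span_zero)
  also have "\<dots> = Lambda 1 0 0"
    by (simp add: Lambda_def insert_commute)
  finally show ?thesis
    by (metis gl_equiv_span_act2 \<open>invertible ?J\<close>)
qed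

lemma gl_equiv_Lambda_1_0_minus_1:
  "gl_equiv (Lambda 1 0 (-1)) (span {W 1 2 + W 3 4, W 1 3, W 2 4})"
proof -
  \<comment> \<open>The columns are chosen so that \<open>?H\<close> maps the decomposable \<open>e\<^sup>1\<^sup>3\<close>, \<open>e\<^sup>2\<^sup>4\<close> into \<open>\<Lambda>(1,0,-1)\<close>.\<close>
  let ?H = "cols4 (ax 1 + ax 2) (ax 2 - ax 1) (ax 3 - ax 4) (ax 3 + ax 4)"
  have "invertible ?H"
    by (rule invertible_cols4I[of _ "(1/2) *\<^sub>R (ax 1 - ax 2)" "(1/2) *\<^sub>R (ax 1 + ax 2)"
        "(1/2) *\<^sub>R (ax 3 + ax 4)" "(1/2) *\<^sub>R (ax 4 - ax 3)"])
      (simp_all only: matrix_vector_mult_scaleR matrix_vector_right_distrib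
        matrix_vector_mult_diff_distrib cols4_axis, simp_all add: vec_eq_iff forall_4 axis_def)
  let ?A = "W 1 2 + W 3 4" and ?B = "W 1 3 + W 4 2" and ?C = "W 1 4 - W 2 3"
  have "act2 ?H ?A = 2 *\<^sub>R ?A" "act2 ?H (W 1 3) = ?B - ?C" "act2 ?H (W 2 4) = (-2) *\<^sub>R ?C + - (?B - ?C)"
    by (simp_all add: act2_wedge) (simp_all add: bivector_entries)
  then have "span (act2 ?H ` {?A, W 1 3, W 2 4}) = span {2 *\<^sub>R ?A, ?B - ?C, (-2) *\<^sub>R ?C + - (?B - ?C)}"
    by simp
  also have "\<dots> = span {2 *\<^sub>R ?A, ?B - ?C, ?C}"
    by (rule span_triple_scale_add) (simp, rule span_neg, simp add: span_base)
  also have "\<dots> = span {2 *\<^sub>R ?A, ?C, 1 *\<^sub>R ?B + - ?C}"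
    by (simp only: scaleR_one diff_conv_add_uminus[symmetric] insert_commute)
  also have "\<dots> = span {2 *\<^sub>R ?A, ?C, ?B}"
    by (rule span_triple_scale_add) (simp, rule span_neg, simp add: span_base)
  also have "\<dots> = Lambda 1 0 (-1)"
    by (subst span_insert_scale) (simp_all add: Lambda_def insert_commute)
  finally show ?thesis
    by (metis gl_equiv_span_act2 \<open>invertible ?H\<close>)
qed

lemma Lambda_normal_form_disc_neg:
  assumes "a \<noteq> 0" and "b^2 - 4*a*c < 0"
  shows "gl_equiv (Lambda a b c) (span {W 1 2 + W 3 4, W 1 3 + W 4 2, W 1 4 + W 2 3})"
proof -
  let ?k = "(4*a*c - b^2) / (4*a^2)"
  have "?k > 0"
    using assms by simp
  have square: "gl_equiv (Lambda a b c) (Lambda 1 0 ?k)"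
    by (rule Lambda_complete_square[OF assms(1)])
  have rescale: "gl_equiv (Lambda 1 0 ?k) (Lambda 1 0 1)"
    using Lambda_rescale[of "sqrt ?k" 1] \<open>?k > 0\<close> assms by simp
  show ?thesis
    using gl_equiv_trans[OF square rescale] by (simp add: Lambda_def)
qed

lemma Lambda_normal_form_disc_zero:
  assumes "a \<noteq> 0" and "b^2 - 4*a*c = 0"
  shows "gl_equiv (Lambda a b c) (span {W 1 2 + W 3 4, W 1 3, W 1 4 + W 2 3})"
proof -
  have square: "gl_equiv (Lambda a b c) (Lambda 1 0 0)"
    using Lambda_complete_square[OF assms(1), of b c] assms(2) by simp
  show ?thesis
    by (rule gl_equiv_trans[OF square gl_equiv_Lambda_1_0_0])
qed

lemma Lambda_normal_form_disc_pos:
  assumes "a \<noteq> 0" and "b^2 - 4*a*c > 0"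
  shows "gl_equiv (Lambda a b c) (span {W 1 2 + W 3 4, W 1 3, W 2 4})"
proof -
  let ?k = "(4*a*c - b^2) / (4*a^2)"
  have "?k < 0"
    using assms by (simp add: divide_neg_pos)
  have square: "gl_equiv (Lambda a b c) (Lambda 1 0 ?k)"
    by (rule Lambda_complete_square[OF assms(1)])
  have rescale: "gl_equiv (Lambda 1 0 ?k) (Lambda 1 0 (-1))"
    using Lambda_rescale[of "sqrt (- ?k)" "-1"] \<open>?k < 0\<close> assms by simp
  show ?thesis
    by (rule gl_equiv_trans[OF gl_equiv_trans[OF square rescale] gl_equiv_Lambda_1_0_minus_1])
qed

theorem lemma2p2:
  fixes e :: "nat \<Rightarrow> real^4" and a b c :: real
  assumes "inj_on e {1..4}" and "independent (e ` {1..4})" and "a \<noteq> 0"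
  shows "\<exists>\<theta>::real^4^4. invertible \<theta> \<and>
    (b^2 - 4*a*c < 0 \<longrightarrow>
       span {eij e 1 2 + eij e 3 4, eij e 1 3 + eij e 4 2, a *\<^sub>R eij e 1 4 + b *\<^sub>R eij e 4 2 + c *\<^sub>R eij e 2 3}
       = act2 \<theta> ` span {eij e 1 2 + eij e 3 4, eij e 1 3 + eij e 4 2, eij e 1 4 + eij e 2 3}) \<and>
    (b^2 - 4*a*c = 0 \<longrightarrow>
       span {eij e 1 2 + eij e 3 4, eij e 1 3 + eij e 4 2, a *\<^sub>R eij e 1 4 + b *\<^sub>R eij e 4 2 + c *\<^sub>R eij e 2 3}
       = act2 \<theta> ` span {eij e 1 2 + eij e 3 4, eij e 1 3, eij e 1 4 + eij e 2 3}) \<and>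
    (b^2 - 4*a*c > 0 \<longrightarrow>
       span {eij e 1 2 + eij e 3 4, eij e 1 3 + eij e 4 2, a *\<^sub>R eij e 1 4 + b *\<^sub>R eij e 4 2 + c *\<^sub>R eij e 2 3}
       = act2 \<theta> ` span {eij e 1 2 + eij e 3 4, eij e 1 3, eij e 2 4})"
proof -
  let ?E = "cols4 (e 1) (e 2) (e 3) (e 4)"
  have "{1..4::nat} = {1, 2, 3, 4}"
    by auto
  then have "invertible ?E"
    using assms(1,2) card_image[OF assms(1)] by (intro invertible_cols4) simp_all
  have in_basis_e: "gl_equiv (span (act2 ?E ` X)) (span (act2 ?E ` Y))"
    if "gl_equiv (span X) (span Y)" for X Y
    using gl_equiv_act2_image[OF \<open>invertible ?E\<close> that] by (simp add: span_act2_image)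
  consider "b^2 - 4*a*c < 0" | "b^2 - 4*a*c = 0" | "b^2 - 4*a*c > 0"
    by linarith
  then show ?thesis
  proof cases
    case 1
    then show ?thesis
      using in_basis_e[OF Lambda_normal_form_disc_neg[OF assms(3) 1, unfolded Lambda_def]]
      unfolding gl_equiv_def by (auto simp: act2_wedge eij_def)
  next
    case 2
    then show ?thesis
      using in_basis_e[OF Lambda_normal_form_disc_zero[OF assms(3) 2, unfolded Lambda_def]]
      unfolding gl_equiv_def by (auto simp: act2_wedge eij_def)
  next
    case 3
    then show ?thesis
      using in_basis_e[OF Lambda_normal_form_disc_pos[OF assms(3) 3, unfolded Lambda_def]]
      unfolding gl_equiv_def by (auto simp: act2_wedge eij_def)
  qed
qed

end
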